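(* Let $G$ be a simple stochastic game, $A$ a set of arcs of $G$, and $\sigma,\sigma'$ two positional MAX strategies such that $\sigma' \succ_{G[A,\sigma]} \sigma$. Then $Z(\sigma')\subseteq Z(\sigma)$, where absorbing sets are taken in $G$.
   Context: A simple stochastic game (SSG) $G$ is a finite directed graph whose vertex set $V$ is partitioned into MAX vertices, MIN vertices, random vertices and a nonempty set $V_S$ of sinks; every non-sink vertex has at least one outgoing arc, every sink has exactly one outgoing arc, a self-loop; each random vertex $x$ carries a rational probability distribution $p_x$ on its out-neighbourhood, positive on every out-neighbour; each sink $s$ has rational value $\mathrm{Val}(s)\in[0,1]$. A positional MAX (resp. MIN) strategy assigns to each MAX (resp. MIN) vertex one of its out-neighbours. Under $\sigma,\tau$ from start $x_0$, the random play moves from MAX vertex $x$ to $\sigma(x)$, from MIN vertex $x$ to $\tau(x)$, from random vertex $x$ to an out-neighbour drawn by $p_x$ independently, and stays at a sink once reached; its value is $\mathrm{Val}(s)$ if it reaches sink $s$, else $0$, and $v^G_{\sigma,\tau}(x_0)$ is its expectation. $v^G_\sigma:=v^G_{\sigma,\tau}$ for a best response $\tau$, i.e. a MIN strategy with $v_{\sigma,\tau}\le v_{\sigma,\tau'}$ pointwise for all MIN strategies $\tau'$ (a positional one exists). Vectors are compared pointwise; $v>v'$ means $v\ge v'$ and $v\ne v'$. We write $\sigma'\succ_H\sigma$ (in a game $H$) if $v^H_{\sigma'}>v^H_\sigma$ and, for every MAX vertex $x$ with $v^H_{\sigma'}(x)=v^H_\sigma(x)$, $\sigma'(x)=\sigma(x)$.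 Transformed game: $G[A,\sigma]$ is obtained from a copy of $G$ by replacing each arc $e=(x,y)\in A$ by an arc $(x,s_e)$ to a new sink $s_e$ of value $v^G_\sigma(y)$ (for random $x$, $p_x(s_e)=p_x(y)$); $y$ is kept. Strategies of $G$ and $G[A,\sigma]$ are identified, and value vectors of $G[A,\sigma]$ are compared only on vertices of $G$. Absorbing sets: an absorbing set for $(\sigma,\tau)$ is a set $Z\subseteq V\setminus V_S$ such that from any vertex of $Z$, playing $(\sigma,\tau)$, the probability of reaching $V\setminus Z$ is zero; $Z(\sigma,\tau)$ is the union of all absorbing sets for $(\sigma,\tau)$; and $Z(\sigma)$ is the inclusion-wise largest of the sets $Z(\sigma,\tau)$ over positional MIN strategies $\tau$ (it exists and equals $Z(\sigma,\tau)$ for some positional best response $\tau$ to $\sigma$). *)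

theory Defs
  imports Complex_Main
begin

datatype vkind = MaxV | MinV | RandV | SinkV

record 'v game =
  verts :: "'v set"
  arcs  :: "('v \<times> 'v) set"
  kind  :: "'v \<Rightarrow> vkind"
  prob  :: "'v \<Rightarrow> 'v \<Rightarrow> real"
  sval  :: "'v \<Rightarrow> real"

definition sinks :: "('v, 'b) game_scheme \<Rightarrow> 'v set" where
  "sinks G = {x \<in> verts G. kind G x = SinkV}"

definition outn :: "('v, 'b) game_scheme \<Rightarrow> 'v \<Rightarrow> 'v set" where
  "outn G x = {y. (x, y) \<in> arcs G}"

definition ssg :: "'v game \<Rightarrow> bool" where
  "ssg G \<longleftrightarrow> finite (verts G) \<and> arcs G \<subseteq> verts G \<times> verts G \<and> sinks G \<noteq> {} \<and>
     (\<forall>x\<in>verts G. kind G x \<noteq> SinkV \<longrightarrow> outn G x \<noteq> {}) \<and>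
     (\<forall>s\<in>sinks G. outn G s = {s}) \<and>
     (\<forall>x\<in>verts G. kind G x = RandV \<longrightarrow>
        (\<forall>y\<in>outn G x. 0 < prob G x y \<and> prob G x y \<in> \<rat>) \<and> (\<Sum>y\<in>outn G x. prob G x y) = 1) \<and>
     (\<forall>s\<in>sinks G. sval G s \<in> \<rat> \<and> 0 \<le> sval G s \<and> sval G s \<le> 1)"

definition max_strategy :: "'v game \<Rightarrow> ('v \<Rightarrow> 'v) \<Rightarrow> bool" where
  "max_strategy G \<sigma> \<longleftrightarrow> (\<forall>x\<in>verts G. kind G x = MaxV \<longrightarrow> (x, \<sigma> x) \<in> arcs G)"

definition min_strategy :: "'v game \<Rightarrow> ('v \<Rightarrow> 'v) \<Rightarrow> bool" where
  "min_strategy G \<tau> \<longleftrightarrow> (\<forall>x\<in>verts G. kind G x = MinV \<longrightarrow> (x, \<tau> x) \<in> arcs G)"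

definition trans :: "'v game \<Rightarrow> ('v \<Rightarrow> 'v) \<Rightarrow> ('v \<Rightarrow> 'v) \<Rightarrow> 'v \<Rightarrow> 'v \<Rightarrow> real" where
  "trans G \<sigma> \<tau> x y = (case kind G x of
      MaxV \<Rightarrow> (if y = \<sigma> x then 1 else 0)
    | MinV \<Rightarrow> (if y = \<tau> x then 1 else 0)
    | RandV \<Rightarrow> (if (x, y) \<in> arcs G then prob G x y else 0)
    | SinkV \<Rightarrow> (if y = x then 1 else 0))"

fun nstep :: "'v game \<Rightarrow> ('v \<Rightarrow> 'v) \<Rightarrow> ('v \<Rightarrow> 'v) \<Rightarrow> nat \<Rightarrow> 'v \<Rightarrow> 'v \<Rightarrow> real" where
  "nstep G \<sigma> \<tau> 0 x y = (if x = y then 1 else 0)"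
| "nstep G \<sigma> \<tau> (Suc n) x y = (\<Sum>z\<in>verts G. trans G \<sigma> \<tau> x z * nstep G \<sigma> \<tau> n z y)"

text \<open>Since sinks are absorbing, the probability of reaching sink s is the limit of the
  probability of being at s after n steps; the value is \<open>\<Sum>\<^sub>s Val(s) P(reach s)\<close>.\<close>

definition play_value :: "'v game \<Rightarrow> ('v \<Rightarrow> 'v) \<Rightarrow> ('v \<Rightarrow> 'v) \<Rightarrow> 'v \<Rightarrow> real" where
  "play_value G \<sigma> \<tau> x = lim (\<lambda>n. \<Sum>s\<in>sinks G. sval G s * nstep G \<sigma> \<tau> n x s)"

definition best_response :: "'v game \<Rightarrow> ('v \<Rightarrow> 'v) \<Rightarrow> ('v \<Rightarrow> 'v) \<Rightarrow> bool" where
  "best_response G \<sigma> \<tau> \<longleftrightarrow> min_strategy G \<tau> \<and>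
     (\<forall>\<tau>'. min_strategy G \<tau>' \<longrightarrow> (\<forall>x\<in>verts G. play_value G \<sigma> \<tau> x \<le> play_value G \<sigma> \<tau>' x))"

definition val_max :: "'v game \<Rightarrow> ('v \<Rightarrow> 'v) \<Rightarrow> 'v \<Rightarrow> real" where
  "val_max G \<sigma> x = play_value G \<sigma> (SOME \<tau>. best_response G \<sigma> \<tau>) x"

definition improves :: "'v game \<Rightarrow> 'v set \<Rightarrow> ('v \<Rightarrow> 'v) \<Rightarrow> ('v \<Rightarrow> 'v) \<Rightarrow> bool" where
  "improves H S \<sigma>' \<sigma> \<longleftrightarrow>
     (\<forall>x\<in>S. val_max H \<sigma> x \<le> val_max H \<sigma>' x) \<and>
     (\<exists>x\<in>S. val_max H \<sigma>' x \<noteq> val_max H \<sigma> x) \<and>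
     (\<forall>x\<in>S. kind H x = MaxV \<longrightarrow> val_max H \<sigma>' x = val_max H \<sigma> x \<longrightarrow> \<sigma>' x = \<sigma> x)"

text \<open>Vertices of G are Inl x; the new sink s_e for e \<in> A is Inr e.\<close>

definition transform :: "'v game \<Rightarrow> ('v \<times> 'v) set \<Rightarrow> ('v \<Rightarrow> 'v) \<Rightarrow> ('v + ('v \<times> 'v)) game" where
  "transform G A \<sigma> = \<lparr>
     verts = Inl ` verts G \<union> Inr ` A,
     arcs = {(Inl x, Inl y) | x y. (x, y) \<in> arcs G - A}
          \<union> {(Inl (fst e), Inr e) | e. e \<in> A}
          \<union> {(Inr e, Inr e) | e. e \<in> A},
     kind = (\<lambda>u. case u of Inl x \<Rightarrow> kind G x | Inr e \<Rightarrow> SinkV),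
     prob = (\<lambda>u w. case (u, w) of
               (Inl x, Inl y) \<Rightarrow> prob G x y
             | (Inl x, Inr e) \<Rightarrow> (if fst e = x then prob G x (snd e) else 0)
             | _ \<Rightarrow> 0),
     sval = (\<lambda>u. case u of Inl x \<Rightarrow> sval G x | Inr e \<Rightarrow> val_max G \<sigma> (snd e)) \<rparr>"

text \<open>Identification of a strategy of G with a strategy of G[A,\<sigma>]: choosing y with
  (x,y) \<in> A corresponds to choosing the new sink s_(x,y).\<close>

definition lift_strategy :: "('v \<times> 'v) set \<Rightarrow> ('v \<Rightarrow> 'v) \<Rightarrow> ('v + ('v \<times> 'v)) \<Rightarrow> ('v + ('v \<times> 'v))" where
  "lift_strategy A \<sigma> u = (case u of
      Inl x \<Rightarrow> (if (x, \<sigma> x) \<in> A then Inr (x, \<sigma> x) else Inl (\<sigma> x))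
    | Inr e \<Rightarrow> Inr e)"

fun hit :: "'v game \<Rightarrow> ('v \<Rightarrow> 'v) \<Rightarrow> ('v \<Rightarrow> 'v) \<Rightarrow> 'v set \<Rightarrow> nat \<Rightarrow> 'v \<Rightarrow> real" where
  "hit G \<sigma> \<tau> T 0 x = (if x \<in> T then 1 else 0)"
| "hit G \<sigma> \<tau> T (Suc n) x = (if x \<in> T then 1 else (\<Sum>y\<in>verts G. trans G \<sigma> \<tau> x y * hit G \<sigma> \<tau> T n y))"

definition reach_prob :: "'v game \<Rightarrow> ('v \<Rightarrow> 'v) \<Rightarrow> ('v \<Rightarrow> 'v) \<Rightarrow> 'v set \<Rightarrow> 'v \<Rightarrow> real" where
  "reach_prob G \<sigma> \<tau> T x = lim (\<lambda>n. hit G \<sigma> \<tau> T n x)"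

definition absorbing :: "'v game \<Rightarrow> ('v \<Rightarrow> 'v) \<Rightarrow> ('v \<Rightarrow> 'v) \<Rightarrow> 'v set \<Rightarrow> bool" where
  "absorbing G \<sigma> \<tau> Z \<longleftrightarrow> Z \<subseteq> verts G - sinks G \<and>
     (\<forall>x\<in>Z. reach_prob G \<sigma> \<tau> (verts G - Z) x = 0)"

definition Zst :: "'v game \<Rightarrow> ('v \<Rightarrow> 'v) \<Rightarrow> ('v \<Rightarrow> 'v) \<Rightarrow> 'v set" where
  "Zst G \<sigma> \<tau> = \<Union>{Z. absorbing G \<sigma> \<tau> Z}"

definition Zmax :: "'v game \<Rightarrow> ('v \<Rightarrow> 'v) \<Rightarrow> 'v set" where
  "Zmax G \<sigma> = (GREATEST Z. \<exists>\<tau>. min_strategy G \<tau> \<and> Z = Zst G \<sigma> \<tau>)"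

end

theory Submission
  imports Defs "HOL-Library.FuncSet"
begin

text \<open>Let \<open>W\<close> be the largest trap of \<open>\<sigma>'\<close>: the largest set of non-sinks in which MIN can keep
  the play against \<open>\<sigma>'\<close>; it is \<open>Z(\<sigma>')\<close>. Let \<open>M\<close> be the maximum of \<open>v\<^sub>\<sigma>\<close> on \<open>W\<close>. At a MAX
  vertex of \<open>W\<close> with \<open>v\<^sub>\<sigma> = M\<close>, MIN can confine the play of \<open>G[A,\<sigma>]\<close> under \<open>\<sigma>'\<close> to \<open>W\<close> and
  the new sinks entered from it, so the value of \<open>\<sigma>'\<close> there is at most \<open>M\<close>; the value of \<open>\<sigma>\<close>
  there is at least \<open>v\<^sub>\<sigma> = M\<close>. The improvement hypothesis then forces \<open>\<sigma>' = \<sigma>\<close> at that vertex.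
  Hence the vertices of \<open>W\<close> where \<open>v\<^sub>\<sigma> = M\<close> form a closed set of non-sinks for \<open>\<sigma>\<close> and a
  confining MIN strategy, so their value is \<open>0\<close> and \<open>M = 0\<close>. Now \<open>\<sigma>' = \<sigma>\<close> at every MAX vertex
  of \<open>W\<close>, so \<open>W\<close> is a trap for \<open>\<sigma>\<close> as well, and \<open>W \<subseteq> Z(\<sigma>)\<close>.\<close>

section \<open>The Markov chain of a strategy pair\<close>

definition step_mean :: "'w game \<Rightarrow> ('w \<Rightarrow> 'w) \<Rightarrow> ('w \<Rightarrow> 'w) \<Rightarrow> ('w \<Rightarrow> real) \<Rightarrow> 'w \<Rightarrow> real" where
  "step_mean K \<rho> \<tau> f x = (\<Sum>y\<in>verts K. trans K \<rho> \<tau> x y * f y)"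

definition horizon_value :: "'w game \<Rightarrow> ('w \<Rightarrow> 'w) \<Rightarrow> ('w \<Rightarrow> 'w) \<Rightarrow> nat \<Rightarrow> 'w \<Rightarrow> real" where
  "horizon_value K \<rho> \<tau> n x = (\<Sum>s\<in>sinks K. sval K s * nstep K \<rho> \<tau> n x s)"

definition closed_under :: "'w game \<Rightarrow> ('w \<Rightarrow> 'w) \<Rightarrow> ('w \<Rightarrow> 'w) \<Rightarrow> 'w set \<Rightarrow> bool" where
  "closed_under K \<rho> \<tau> Z \<longleftrightarrow> (\<forall>x\<in>Z. \<forall>y\<in>verts K. trans K \<rho> \<tau> x y \<noteq> 0 \<longrightarrow> y \<in> Z)"

lemma sum_point_mass:
  assumes "finite V" "a \<in> V"
  shows "(\<Sum>y\<in>V. (if y = a then 1 else 0) * (f y :: real)) = f a"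
proof -
  have "(\<Sum>y\<in>V. (if y = a then 1 else 0) * f y) = (\<Sum>y\<in>V. if y = a then f y else 0)"
    by (rule sum.cong) auto
  then show ?thesis using assms by simp
qed

lemma trans_cong:
  assumes "kind K x = MaxV \<Longrightarrow> \<rho>1 x = \<rho>2 x" and "kind K x = MinV \<Longrightarrow> \<tau>1 x = \<tau>2 x"
  shows "trans K \<rho>1 \<tau>1 x = trans K \<rho>2 \<tau>2 x"
  using assms by (auto simp: trans_def fun_eq_iff split: vkind.split)

lemma step_mean_cong:
  assumes "kind K x = MaxV \<Longrightarrow> \<rho>1 x = \<rho>2 x" and "kind K x = MinV \<Longrightarrow> \<tau>1 x = \<tau>2 x"
  shows "step_mean K \<rho>1 \<tau>1 f x = step_mean K \<rho>2 \<tau>2 f x"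
proof -
  have "trans K \<rho>1 \<tau>1 x = trans K \<rho>2 \<tau>2 x" by (rule trans_cong) (use assms in auto)
  then show ?thesis by (simp add: step_mean_def)
qed

lemma step_mean_cong_fun:
  "(\<And>y. y \<in> verts K \<Longrightarrow> f y = g y) \<Longrightarrow> step_mean K \<rho> \<tau> f x = step_mean K \<rho> \<tau> g x"
  by (simp add: step_mean_def)

lemma horizon_value_Suc:
  "horizon_value K \<rho> \<tau> (Suc n) x = step_mean K \<rho> \<tau> (horizon_value K \<rho> \<tau> n) x"
proof -
  have "horizon_value K \<rho> \<tau> (Suc n) x
      = (\<Sum>s\<in>sinks K. \<Sum>y\<in>verts K. trans K \<rho> \<tau> x y * (sval K s * nstep K \<rho> \<tau> n y s))"
    by (simp add: horizon_value_def sum_distrib_left mult_ac)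
  also have "\<dots> = step_mean K \<rho> \<tau> (horizon_value K \<rho> \<tau> n) x"
    by (subst sum.swap) (simp add: step_mean_def horizon_value_def sum_distrib_left)
  finally show ?thesis .
qed

text \<open>Only what the Markov chain arguments need: unlike \<open>ssg\<close>, this also holds for \<open>G[A,\<sigma>]\<close>,
  whose new sink values are values of \<open>G\<close> and not known to be rational.\<close>

locale stochastic_game =
  fixes K :: "'w game"
  assumes finite_verts: "finite (verts K)"
    and arcs_in_verts: "arcs K \<subseteq> verts K \<times> verts K"
    and MinV_arc: "\<And>x. x \<in> verts K \<Longrightarrow> kind K x = MinV \<Longrightarrow> \<exists>y. (x, y) \<in> arcs K"
    and prob_nonneg: "\<And>x y. x \<in> verts K \<Longrightarrow> kind K x = RandV \<Longrightarrow> (x, y) \<in> arcs K \<Longrightarrow> 0 \<le> prob K x y"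
    and prob_sum: "\<And>x. x \<in> verts K \<Longrightarrow> kind K x = RandV \<Longrightarrow>
      (\<Sum>y\<in>verts K. if (x, y) \<in> arcs K then prob K x y else 0) = 1"
    and sval_nonneg: "\<And>s. s \<in> sinks K \<Longrightarrow> 0 \<le> sval K s"
begin

lemma finite_sinks: "finite (sinks K)"
  using finite_verts by (simp add: sinks_def)

lemma max_strategy_in_verts: "max_strategy K \<rho> \<Longrightarrow> x \<in> verts K \<Longrightarrow> kind K x = MaxV \<Longrightarrow> \<rho> x \<in> verts K"
  using arcs_in_verts by (auto simp: max_strategy_def)

lemma min_strategy_in_verts: "min_strategy K \<tau> \<Longrightarrow> x \<in> verts K \<Longrightarrow> kind K x = MinV \<Longrightarrow> \<tau> x \<in> verts K"
  using arcs_in_verts by (auto simp: min_strategy_def)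

lemma min_strategy_exists: "\<exists>\<tau>. min_strategy K \<tau>"
proof -
  have "\<forall>x\<in>{x\<in>verts K. kind K x = MinV}. \<exists>y. (x, y) \<in> arcs K"
    using MinV_arc by blast
  then obtain \<tau> where "\<forall>x\<in>{x\<in>verts K. kind K x = MinV}. (x, \<tau> x) \<in> arcs K"
    by (rule bchoice[THEN exE])
  then show ?thesis by (auto simp: min_strategy_def)
qed

lemma trans_nonneg: "x \<in> verts K \<Longrightarrow> 0 \<le> trans K \<rho> \<tau> x y"
  using prob_nonneg by (auto simp: trans_def split: vkind.split)

lemma step_mean_MaxV:
  assumes "max_strategy K \<rho>" "x \<in> verts K" "kind K x = MaxV"
  shows "step_mean K \<rho> \<tau> f x = f (\<rho> x)"
  using sum_point_mass[OF finite_verts max_strategy_in_verts[OF assms]] assms(3)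
  by (simp add: step_mean_def trans_def)

lemma step_mean_MinV:
  assumes "min_strategy K \<tau>" "x \<in> verts K" "kind K x = MinV"
  shows "step_mean K \<rho> \<tau> f x = f (\<tau> x)"
  using sum_point_mass[OF finite_verts min_strategy_in_verts[OF assms]] assms(3)
  by (simp add: step_mean_def trans_def)

lemma step_mean_SinkV:
  assumes "x \<in> verts K" "kind K x = SinkV"
  shows "step_mean K \<rho> \<tau> f x = f x"
  using sum_point_mass[OF finite_verts assms(1)] assms(2) by (simp add: step_mean_def trans_def)

lemma step_mean_const:
  assumes "max_strategy K \<rho>" "min_strategy K \<tau>" "x \<in> verts K"
  shows "step_mean K \<rho> \<tau> (\<lambda>_. c) x = c"
proof (cases "kind K x")
  case RandV
  then show ?thesis
    using prob_sum[OF assms(3)] by (simp add: step_mean_def trans_def sum_distrib_right[symmetric])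
qed (use assms step_mean_MaxV step_mean_MinV step_mean_SinkV in auto)

lemma step_mean_nonneg:
  "x \<in> verts K \<Longrightarrow> (\<And>y. y \<in> verts K \<Longrightarrow> 0 \<le> f y) \<Longrightarrow> 0 \<le> step_mean K \<rho> \<tau> f x"
  unfolding step_mean_def by (intro sum_nonneg mult_nonneg_nonneg trans_nonneg)

lemma step_mean_mono_on_support:
  assumes "x \<in> verts K" and "\<And>y. y \<in> verts K \<Longrightarrow> trans K \<rho> \<tau> x y \<noteq> 0 \<Longrightarrow> f y \<le> g y"
  shows "step_mean K \<rho> \<tau> f x \<le> step_mean K \<rho> \<tau> g x"
  unfolding step_mean_def
proof (rule sum_mono)
  fix y assume "y \<in> verts K"
  then show "trans K \<rho> \<tau> x y * f y \<le> trans K \<rho> \<tau> x y * g y"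
    using assms trans_nonneg[OF assms(1)] by (cases "trans K \<rho> \<tau> x y = 0") (auto intro: mult_left_mono)
qed

lemma step_mean_le_bound:
  assumes "max_strategy K \<rho>" "min_strategy K \<tau>" "x \<in> verts K"
    and "\<And>y. y \<in> verts K \<Longrightarrow> trans K \<rho> \<tau> x y \<noteq> 0 \<Longrightarrow> f y \<le> c"
  shows "step_mean K \<rho> \<tau> f x \<le> c"
  using step_mean_mono_on_support[of x \<rho> \<tau> f "\<lambda>_. c"] step_mean_const[OF assms(1-3)] assms(3,4)
  by simp

lemma step_mean_attains_bound:
  assumes "max_strategy K \<rho>" "min_strategy K \<tau>" "x \<in> verts K"
    and bound: "\<And>y. y \<in> verts K \<Longrightarrow> trans K \<rho> \<tau> x y \<noteq> 0 \<Longrightarrow> f y \<le> c"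
    and mean: "step_mean K \<rho> \<tau> f x = c"
    and "y \<in> verts K" "trans K \<rho> \<tau> x y \<noteq> 0"
  shows "f y = c"
proof -
  define d where "d y = trans K \<rho> \<tau> x y * (c - f y)" for y
  have "sum d (verts K) = step_mean K \<rho> \<tau> (\<lambda>_. c) x - step_mean K \<rho> \<tau> f x"
    unfolding d_def step_mean_def right_diff_distrib by (rule sum_subtractf)
  then have sum_0: "sum d (verts K) = 0"
    using step_mean_const[OF assms(1-3)] mean by simp
  have "0 \<le> d y" if "y \<in> verts K" for y
    using bound[OF that] trans_nonneg[OF assms(3)] by (cases "trans K \<rho> \<tau> x y = 0") (auto simp: d_def)
  then have "d y = 0"
    using iffD1[OF sum_nonneg_eq_0_iff[OF finite_verts] sum_0] assms(6) by blast
  then show ?thesis using assms(7) by (simp add: d_def)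
qed

lemma horizon_value_0: "horizon_value K \<rho> \<tau> 0 x = (if x \<in> sinks K then sval K x else 0)"
proof -
  have "horizon_value K \<rho> \<tau> 0 x = (\<Sum>s\<in>sinks K. if s = x then sval K s else 0)"
    unfolding horizon_value_def by (rule sum.cong) auto
  then show ?thesis using finite_sinks by simp
qed

lemma horizon_value_nonneg: "x \<in> verts K \<Longrightarrow> 0 \<le> horizon_value K \<rho> \<tau> n x"
proof (induction n arbitrary: x)
  case 0
  then show ?case by (simp add: horizon_value_0 sval_nonneg)
next
  case (Suc n)
  then show ?case by (simp add: horizon_value_Suc step_mean_nonneg)
qed

lemma horizon_value_le_Suc:
  "x \<in> verts K \<Longrightarrow> horizon_value K \<rho> \<tau> n x \<le> horizon_value K \<rho> \<tau> (Suc n) x"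
proof (induction n arbitrary: x)
  case 0
  show ?case
  proof (cases "x \<in> sinks K")
    case True
    then show ?thesis by (simp add: horizon_value_Suc step_mean_SinkV sinks_def)
  next
    case False
    then show ?thesis using horizon_value_nonneg[OF 0] by (simp add: horizon_value_0)
  qed
next
  case (Suc n)
  then show ?case
    unfolding horizon_value_Suc[of _ _ _ "Suc n"] horizon_value_Suc[of _ _ _ n]
    by (intro step_mean_mono_on_support) auto
qed

text \<open>Play values are the least fixed point of \<open>step_mean\<close> above the sink values.\<close>

lemma horizon_value_le_on_closed:
  assumes "Z \<subseteq> verts K" "closed_under K \<rho> \<tau> Z"
    and "\<And>x. x \<in> Z \<Longrightarrow> 0 \<le> f x"
    and "\<And>s. s \<in> Z \<Longrightarrow> s \<in> sinks K \<Longrightarrow> sval K s \<le> f s"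
    and "\<And>x. x \<in> Z \<Longrightarrow> step_mean K \<rho> \<tau> f x \<le> f x"
    and "x \<in> Z"
  shows "horizon_value K \<rho> \<tau> n x \<le> f x"
  using assms(6)
proof (induction n arbitrary: x)
  case 0
  then show ?case using assms(3,4) by (simp add: horizon_value_0)
next
  case (Suc n)
  have "horizon_value K \<rho> \<tau> (Suc n) x = step_mean K \<rho> \<tau> (horizon_value K \<rho> \<tau> n) x"
    by (rule horizon_value_Suc)
  also have "\<dots> \<le> step_mean K \<rho> \<tau> f x"
    using assms(1,2) Suc by (intro step_mean_mono_on_support) (auto simp: closed_under_def)
  also have "\<dots> \<le> f x" using assms(5) Suc.prems .
  finally show ?case .
qed

lemma horizon_value_tendsto:
  assumes "max_strategy K \<rho>" "min_strategy K \<tau>" "x \<in> verts K"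
  shows "(\<lambda>n. horizon_value K \<rho> \<tau> n x) \<longlonglongrightarrow> play_value K \<rho> \<tau> x"
proof -
  define c where "c = (\<Sum>s\<in>sinks K. sval K s)"
  have "horizon_value K \<rho> \<tau> n x \<le> c" for n
  proof (rule horizon_value_le_on_closed[of "verts K"])
    show "0 \<le> c" unfolding c_def by (intro sum_nonneg sval_nonneg)
    show "sval K s \<le> c" if "s \<in> sinks K" for s
      unfolding c_def using that finite_sinks sval_nonneg by (intro member_le_sum) auto
  qed (use assms step_mean_const in \<open>auto simp: closed_under_def\<close>)
  moreover have "incseq (\<lambda>n. horizon_value K \<rho> \<tau> n x)"
    using horizon_value_le_Suc[OF assms(3)] by (rule incseq_SucI)
  ultimately obtain L where "(\<lambda>n. horizon_value K \<rho> \<tau> n x) \<longlonglongrightarrow> L"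
    using incseq_convergent by metis
  then show ?thesis by (simp add: play_value_def horizon_value_def[symmetric] limI)
qed

lemma play_value_le_on_closed:
  assumes "max_strategy K \<rho>" "min_strategy K \<tau>"
    and "Z \<subseteq> verts K" "closed_under K \<rho> \<tau> Z"
    and "\<And>x. x \<in> Z \<Longrightarrow> 0 \<le> f x"
    and "\<And>s. s \<in> Z \<Longrightarrow> s \<in> sinks K \<Longrightarrow> sval K s \<le> f s"
    and "\<And>x. x \<in> Z \<Longrightarrow> step_mean K \<rho> \<tau> f x \<le> f x"
    and "x \<in> Z"
  shows "play_value K \<rho> \<tau> x \<le> f x"
proof (rule LIMSEQ_le_const2)
  show "(\<lambda>n. horizon_value K \<rho> \<tau> n x) \<longlonglongrightarrow> play_value K \<rho> \<tau> x"
    using assms(3,8) by (intro horizon_value_tendsto[OF assms(1,2)]) auto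
qed (use horizon_value_le_on_closed[OF assms(3-8)] in auto)

lemma play_value_le_superharmonic:
  assumes "max_strategy K \<rho>" "min_strategy K \<tau>"
    and "\<And>x. x \<in> verts K \<Longrightarrow> 0 \<le> f x"
    and "\<And>s. s \<in> sinks K \<Longrightarrow> sval K s \<le> f s"
    and "\<And>x. x \<in> verts K \<Longrightarrow> step_mean K \<rho> \<tau> f x \<le> f x"
    and "x \<in> verts K"
  shows "play_value K \<rho> \<tau> x \<le> f x"
  using assms by (intro play_value_le_on_closed[of \<rho> \<tau> "verts K"]) (auto simp: closed_under_def)

lemma play_value_nonneg:
  assumes "max_strategy K \<rho>" "min_strategy K \<tau>" "x \<in> verts K"
  shows "0 \<le> play_value K \<rho> \<tau> x"
  using horizon_value_tendsto[OF assms] horizon_value_nonneg[OF assms(3)]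
  by (intro LIMSEQ_le_const) auto

lemma play_value_harmonic:
  assumes "max_strategy K \<rho>" "min_strategy K \<tau>" "x \<in> verts K"
  shows "play_value K \<rho> \<tau> x = step_mean K \<rho> \<tau> (play_value K \<rho> \<tau>) x"
proof (rule LIMSEQ_unique)
  show "(\<lambda>n. horizon_value K \<rho> \<tau> (Suc n) x) \<longlonglongrightarrow> play_value K \<rho> \<tau> x"
    using horizon_value_tendsto[OF assms] by (rule LIMSEQ_Suc)
  show "(\<lambda>n. horizon_value K \<rho> \<tau> (Suc n) x) \<longlonglongrightarrow> step_mean K \<rho> \<tau> (play_value K \<rho> \<tau>) x"
    unfolding horizon_value_Suc step_mean_def
    by (intro tendsto_sum tendsto_mult tendsto_const horizon_value_tendsto[OF assms(1,2)])
qed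

lemma play_value_sink:
  assumes "max_strategy K \<rho>" "min_strategy K \<tau>" "s \<in> sinks K"
  shows "play_value K \<rho> \<tau> s = sval K s"
proof -
  have s: "s \<in> verts K" "kind K s = SinkV" using assms(3) by (auto simp: sinks_def)
  have "horizon_value K \<rho> \<tau> n s = sval K s" for n
    by (induction n) (use assms(3) s in \<open>simp_all add: horizon_value_0 horizon_value_Suc step_mean_SinkV\<close>)
  then show ?thesis
    using horizon_value_tendsto[OF assms(1,2) s(1)] by (simp add: LIMSEQ_const_iff)
qed

lemma play_value_eq_0_on_closed:
  assumes "max_strategy K \<rho>" "min_strategy K \<tau>"
    and "Z \<subseteq> verts K - sinks K" "closed_under K \<rho> \<tau> Z" "x \<in> Z"
  shows "play_value K \<rho> \<tau> x = 0"
proof -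
  have "play_value K \<rho> \<tau> x \<le> 0"
    using assms by (intro play_value_le_on_closed[of \<rho> \<tau> Z]) (auto simp: step_mean_def)
  then show ?thesis using play_value_nonneg[OF assms(1,2)] assms(3,5) by force
qed

section \<open>Best responses and values\<close>

lemma play_value_switch_le:
  assumes "max_strategy K \<rho>" "min_strategy K \<tau>1" "min_strategy K \<tau>2"
    and switch: "\<And>x. x \<in> verts K \<Longrightarrow> kind K x = MinV \<Longrightarrow>
      \<tau> x = (if play_value K \<rho> \<tau>1 x < play_value K \<rho> \<tau>2 x then \<tau>1 x else \<tau>2 x)"
    and "x \<in> verts K"
  shows "play_value K \<rho> \<tau> x \<le> min (play_value K \<rho> \<tau>1 x) (play_value K \<rho> \<tau>2 x)"
proof -
  define f where "f y = min (play_value K \<rho> \<tau>1 y) (play_value K \<rho> \<tau>2 y)" for y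
  have \<tau>: "min_strategy K \<tau>" using assms(2,3) switch by (auto simp: min_strategy_def)
  have super: "step_mean K \<rho> \<tau> f y \<le> f y" if y: "y \<in> verts K" for y
  proof -
    have le1: "step_mean K \<rho> \<tau>1 f y \<le> play_value K \<rho> \<tau>1 y"
      using play_value_harmonic[OF assms(1,2) y] step_mean_mono_on_support[OF y, of \<rho> \<tau>1 f]
      by (simp add: f_def)
    have le2: "step_mean K \<rho> \<tau>2 f y \<le> play_value K \<rho> \<tau>2 y"
      using play_value_harmonic[OF assms(1,3) y] step_mean_mono_on_support[OF y, of \<rho> \<tau>2 f]
      by (simp add: f_def)
    show ?thesis
    proof (cases "kind K y = MinV")
      case True
      then show ?thesis
        using le1 le2 switch[OF y] step_mean_cong[of K y \<rho> \<rho> \<tau> \<tau>1 f] step_mean_cong[of K y \<rho> \<rho> \<tau> \<tau>2 f]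
        by (cases "play_value K \<rho> \<tau>1 y < play_value K \<rho> \<tau>2 y") (auto simp: f_def)
    next
      case False
      then show ?thesis
        using le1 le2 step_mean_cong[of K y \<rho> \<rho> \<tau> \<tau>1 f] step_mean_cong[of K y \<rho> \<rho> \<tau> \<tau>2 f]
        by (auto simp: f_def)
    qed
  qed
  have "play_value K \<rho> \<tau> x \<le> f x"
  proof (rule play_value_le_superharmonic[OF assms(1) \<tau> _ _ super assms(5)])
    show "0 \<le> f y" if "y \<in> verts K" for y
      using play_value_nonneg[OF assms(1,2) that] play_value_nonneg[OF assms(1,3) that] by (simp add: f_def)
    show "sval K s \<le> f s" if "s \<in> sinks K" for s
      using play_value_sink[OF assms(1,2) that] play_value_sink[OF assms(1,3) that] by (simp add: f_def)
  qed
  then show ?thesis by (simp add: f_def)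
qed

text \<open>A best response is found among the finitely many strategies restricted to the MIN vertices,
  as one minimising the total value; switching to a better strategy where possible shows that it
  is pointwise optimal.\<close>

lemma best_response_exists:
  assumes "max_strategy K \<rho>"
  shows "\<exists>\<tau>. best_response K \<rho> \<tau>"
proof -
  define M where "M = {x \<in> verts K. kind K x = MinV}"
  define C where "C = {\<tau> \<in> M \<rightarrow>\<^sub>E verts K. min_strategy K \<tau>}"
  define S where "S \<tau> = (\<Sum>x\<in>verts K. play_value K \<rho> \<tau> x)" for \<tau>
  have restrict_in_C: "restrict \<tau> M \<in> C" if "min_strategy K \<tau>" for \<tau>
    using that min_strategy_in_verts by (auto simp: C_def M_def min_strategy_def)
  have "C \<subseteq> M \<rightarrow>\<^sub>E verts K" by (auto simp: C_def)
  moreover have "finite (M \<rightarrow>\<^sub>E verts K)" using finite_verts by (intro finite_PiE) (auto simp: M_def)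
  ultimately have "finite C" by (rule finite_subset)
  moreover have "C \<noteq> {}" using min_strategy_exists restrict_in_C by blast
  ultimately obtain \<tau>s where \<tau>s: "\<tau>s \<in> C" and least: "\<And>\<tau>. \<tau> \<in> C \<Longrightarrow> S \<tau>s \<le> S \<tau>"
    using arg_min_if_finite(1) arg_min_least by metis
  have "play_value K \<rho> \<tau>s x \<le> play_value K \<rho> \<tau> x" if \<tau>: "min_strategy K \<tau>" and x: "x \<in> verts K" for \<tau> x
  proof (rule ccontr)
    assume gt: "\<not> ?thesis"
    define \<tau>' where "\<tau>' = restrict (\<lambda>y. if play_value K \<rho> \<tau> y < play_value K \<rho> \<tau>s y then \<tau> y else \<tau>s y) M"
    have sw: "play_value K \<rho> \<tau>' y \<le> min (play_value K \<rho> \<tau> y) (play_value K \<rho> \<tau>s y)" if "y \<in> verts K" for y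
      using \<tau>s that by (intro play_value_switch_le[OF assms \<tau>]) (auto simp: C_def \<tau>'_def M_def)
    have "min_strategy K \<tau>'" using \<tau> \<tau>s by (auto simp: \<tau>'_def C_def M_def min_strategy_def)
    then have "S \<tau>s \<le> S \<tau>'" using least restrict_in_C unfolding \<tau>'_def by force
    also have "\<dots> < S \<tau>s"
      unfolding S_def
    proof (rule sum_strict_mono_ex1[OF finite_verts])
      show "\<forall>y\<in>verts K. play_value K \<rho> \<tau>' y \<le> play_value K \<rho> \<tau>s y" using sw by auto
      show "\<exists>y\<in>verts K. play_value K \<rho> \<tau>' y < play_value K \<rho> \<tau>s y" using sw[OF x] gt x by force
    qed
    finally show False by simp
  qed
  then show ?thesis using \<tau>s by (auto simp: best_response_def C_def)
qed

lemma val_max_eq_play_value: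
  assumes "best_response K \<rho> \<tau>" "x \<in> verts K"
  shows "val_max K \<rho> x = play_value K \<rho> \<tau> x"
proof -
  have "best_response K \<rho> (SOME \<tau>. best_response K \<rho> \<tau>)" by (rule someI[of "best_response K \<rho>", OF assms(1)])
  then show ?thesis
    using assms unfolding val_max_def best_response_def by (blast intro: antisym)
qed

lemma val_max_le_play_value:
  assumes "max_strategy K \<rho>" "min_strategy K \<tau>" "x \<in> verts K"
  shows "val_max K \<rho> x \<le> play_value K \<rho> \<tau> x"
proof -
  obtain \<tau>b where \<tau>b: "best_response K \<rho> \<tau>b" using best_response_exists[OF assms(1)] ..
  then have "val_max K \<rho> x = play_value K \<rho> \<tau>b x" using assms(3) by (rule val_max_eq_play_value)
  also have "\<dots> \<le> play_value K \<rho> \<tau> x" using \<tau>b assms(2,3) by (simp add: best_response_def)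
  finally show ?thesis .
qed

lemma val_max_nonneg:
  assumes "max_strategy K \<rho>" "x \<in> verts K"
  shows "0 \<le> val_max K \<rho> x"
proof -
  obtain \<tau>b where \<tau>b: "best_response K \<rho> \<tau>b" using best_response_exists[OF assms(1)] ..
  then have "min_strategy K \<tau>b" by (simp add: best_response_def)
  then show ?thesis
    using val_max_eq_play_value[OF \<tau>b assms(2)] play_value_nonneg[OF assms(1) _ assms(2)] by simp
qed

lemma val_max_sink:
  assumes "max_strategy K \<rho>" "s \<in> sinks K"
  shows "val_max K \<rho> s = sval K s"
proof -
  obtain \<tau>b where \<tau>b: "best_response K \<rho> \<tau>b" using best_response_exists[OF assms(1)] ..
  then have "min_strategy K \<tau>b" by (simp add: best_response_def)
  moreover have "s \<in> verts K" using assms(2) by (simp add: sinks_def)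
  ultimately show ?thesis
    using val_max_eq_play_value[OF \<tau>b] play_value_sink[OF assms(1) _ assms(2)] by simp
qed

lemma val_max_harmonic:
  assumes "max_strategy K \<rho>" "best_response K \<rho> \<tau>" "x \<in> verts K"
  shows "val_max K \<rho> x = step_mean K \<rho> \<tau> (val_max K \<rho>) x"
proof -
  have \<tau>: "min_strategy K \<tau>" using assms(2) by (simp add: best_response_def)
  have "val_max K \<rho> x = play_value K \<rho> \<tau> x" using assms(2,3) by (rule val_max_eq_play_value)
  also have "\<dots> = step_mean K \<rho> \<tau> (play_value K \<rho> \<tau>) x" by (rule play_value_harmonic[OF assms(1) \<tau> assms(3)])
  also have "\<dots> = step_mean K \<rho> \<tau> (val_max K \<rho>) x"
    by (rule step_mean_cong_fun) (simp add: val_max_eq_play_value[OF assms(2)])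
  finally show ?thesis .
qed

lemma val_max_MinV_le:
  assumes "max_strategy K \<rho>" "x \<in> verts K" "kind K x = MinV" "(x, z) \<in> arcs K"
  shows "val_max K \<rho> x \<le> val_max K \<rho> z"
proof (rule ccontr)
  assume "\<not> ?thesis"
  then have less: "val_max K \<rho> z < val_max K \<rho> x" by simp
  have z: "z \<in> verts K" using assms(4) arcs_in_verts by auto
  obtain \<tau> where \<tau>: "best_response K \<rho> \<tau>" using best_response_exists[OF assms(1)] ..
  define \<tau>z where "\<tau>z = \<tau>(x := z)"
  have \<tau>z: "min_strategy K \<tau>z"
    using \<tau> assms(4) by (auto simp: \<tau>z_def best_response_def min_strategy_def)
  have mean_\<tau>z: "step_mean K \<rho> \<tau>z f x = f z" for f
    unfolding \<tau>z_def using step_mean_MinV[OF \<tau>z[unfolded \<tau>z_def] assms(2,3)] by simp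
  have "play_value K \<rho> \<tau>z y \<le> val_max K \<rho> y" if "y \<in> verts K" for y
  proof (rule play_value_le_superharmonic[OF assms(1) \<tau>z _ _ _ that])
    fix y assume y: "y \<in> verts K"
    show "step_mean K \<rho> \<tau>z (val_max K \<rho>) y \<le> val_max K \<rho> y"
    proof (cases "y = x")
      case True
      then show ?thesis using mean_\<tau>z less by simp
    next
      case False
      then have "step_mean K \<rho> \<tau>z (val_max K \<rho>) y = step_mean K \<rho> \<tau> (val_max K \<rho>) y"
        by (intro step_mean_cong) (simp_all add: \<tau>z_def)
      then show ?thesis using val_max_harmonic[OF assms(1) \<tau> y] by simp
    qed
  qed (use assms(1) val_max_nonneg val_max_sink in auto)
  then have "play_value K \<rho> \<tau>z x \<le> val_max K \<rho> z"
    using play_value_harmonic[OF assms(1) \<tau>z assms(2)] mean_\<tau>z z by simp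
  also have "\<dots> < val_max K \<rho> x" by (rule less)
  also have "\<dots> \<le> play_value K \<rho> \<tau>z x" by (rule val_max_le_play_value[OF assms(1) \<tau>z assms(2)])
  finally show False by simp
qed

end

section \<open>Absorbing sets and traps\<close>

text \<open>A trap for \<open>\<rho>\<close> is a set of non-sinks in which MIN can keep the play forever against
  \<open>\<rho>\<close>; the largest one is \<open>Z(\<rho>)\<close> (lemma \<open>Zmax_eq_trap\<close>).\<close>

definition is_trap :: "'w game \<Rightarrow> ('w \<Rightarrow> 'w) \<Rightarrow> 'w set \<Rightarrow> bool" where
  "is_trap K \<rho> Z \<longleftrightarrow> Z \<subseteq> verts K - sinks K \<and> (\<forall>x\<in>Z.
     (kind K x = MaxV \<longrightarrow> \<rho> x \<in> Z) \<and>
     (kind K x = MinV \<longrightarrow> (\<exists>y\<in>Z. (x, y) \<in> arcs K)) \<and>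
     (kind K x = RandV \<longrightarrow> (\<forall>y. (x, y) \<in> arcs K \<longrightarrow> y \<in> Z)))"

definition trap :: "'w game \<Rightarrow> ('w \<Rightarrow> 'w) \<Rightarrow> 'w set" where
  "trap K \<rho> = \<Union>{Z. is_trap K \<rho> Z}"

lemma is_trap_trap: "is_trap K \<rho> (trap K \<rho>)"
  unfolding is_trap_def trap_def by blast

lemma is_trap_subset_trap: "is_trap K \<rho> Z \<Longrightarrow> Z \<subseteq> trap K \<rho>"
  unfolding trap_def by blast

context stochastic_game
begin

lemma hit_Suc: "hit K \<rho> \<tau> T (Suc n) x = (if x \<in> T then 1 else step_mean K \<rho> \<tau> (hit K \<rho> \<tau> T n) x)"
  by (simp add: step_mean_def)

lemma hit_nonneg: "x \<in> verts K \<Longrightarrow> 0 \<le> hit K \<rho> \<tau> T n x"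
proof (induction n arbitrary: x)
  case (Suc n)
  then show ?case
    using step_mean_nonneg[OF Suc.prems, of "hit K \<rho> \<tau> T n"] by (simp add: hit_Suc del: hit.simps(2))
qed simp

lemma hit_le_Suc: "x \<in> verts K \<Longrightarrow> hit K \<rho> \<tau> T n x \<le> hit K \<rho> \<tau> T (Suc n) x"
proof (induction n arbitrary: x)
  case 0
  then show ?case
    using step_mean_nonneg[OF 0, of "hit K \<rho> \<tau> T 0"] hit_nonneg by (simp add: hit_Suc del: hit.simps(2))
next
  case (Suc n)
  then have "step_mean K \<rho> \<tau> (hit K \<rho> \<tau> T n) x \<le> step_mean K \<rho> \<tau> (hit K \<rho> \<tau> T (Suc n)) x"
    by (intro step_mean_mono_on_support) auto
  then show ?case unfolding hit_Suc[of _ _ _ "Suc n"] hit_Suc[of _ _ _ n] by simp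
qed

lemma hit_le_1:
  assumes "max_strategy K \<rho>" "min_strategy K \<tau>" "x \<in> verts K"
  shows "hit K \<rho> \<tau> T n x \<le> 1"
  using assms(3)
proof (induction n arbitrary: x)
  case (Suc n)
  then show ?case
    using step_mean_le_bound[OF assms(1,2) Suc.prems, of "hit K \<rho> \<tau> T n"]
    by (simp add: hit_Suc del: hit.simps(2))
qed simp

lemma hit_le_reach_prob:
  assumes "max_strategy K \<rho>" "min_strategy K \<tau>" "x \<in> verts K"
  shows "hit K \<rho> \<tau> T n x \<le> reach_prob K \<rho> \<tau> T x"
proof -
  have inc: "incseq (\<lambda>n. hit K \<rho> \<tau> T n x)"
    using hit_le_Suc[OF assms(3)] by (rule incseq_SucI)
  then obtain L where "(\<lambda>n. hit K \<rho> \<tau> T n x) \<longlonglongrightarrow> L"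
    using incseq_convergent hit_le_1[OF assms] by metis
  then have "(\<lambda>n. hit K \<rho> \<tau> T n x) \<longlonglongrightarrow> reach_prob K \<rho> \<tau> T x"
    by (simp add: reach_prob_def limI)
  then show ?thesis by (rule incseq_le[OF inc])
qed

lemma absorbing_iff_closed:
  assumes "max_strategy K \<rho>" "min_strategy K \<tau>"
  shows "absorbing K \<rho> \<tau> Z \<longleftrightarrow> Z \<subseteq> verts K - sinks K \<and> closed_under K \<rho> \<tau> Z"
proof (intro iffI conjI)
  assume abs: "absorbing K \<rho> \<tau> Z"
  then show Z: "Z \<subseteq> verts K - sinks K" by (simp add: absorbing_def)
  show "closed_under K \<rho> \<tau> Z"
    unfolding closed_under_def
  proof (intro ballI impI)
    fix x y assume x: "x \<in> Z" and y: "y \<in> verts K" and xy: "trans K \<rho> \<tau> x y \<noteq> 0"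
    show "y \<in> Z"
    proof (rule ccontr)
      assume "y \<notin> Z"
      have xv: "x \<in> verts K" using x Z by auto
      let ?T = "verts K - Z"
      have "trans K \<rho> \<tau> x y * hit K \<rho> \<tau> ?T 0 y \<le> step_mean K \<rho> \<tau> (hit K \<rho> \<tau> ?T 0) x"
        unfolding step_mean_def using y finite_verts trans_nonneg[OF xv] hit_nonneg
        by (intro member_le_sum) auto
      also have "\<dots> = hit K \<rho> \<tau> ?T (Suc 0) x" using x by (simp add: hit_Suc del: hit.simps(2))
      also have "\<dots> \<le> reach_prob K \<rho> \<tau> ?T x" by (rule hit_le_reach_prob[OF assms xv])
      also have "\<dots> = 0" using abs x by (simp add: absorbing_def)
      finally show False
        using xy trans_nonneg[OF xv, of \<rho> \<tau> y] \<open>y \<notin> Z\<close> y by simp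
    qed
  qed
next
  assume Z: "Z \<subseteq> verts K - sinks K \<and> closed_under K \<rho> \<tau> Z"
  have "hit K \<rho> \<tau> (verts K - Z) n x = 0" if "x \<in> Z" for n x
    using that
  proof (induction n arbitrary: x)
    case (Suc n)
    then have "step_mean K \<rho> \<tau> (hit K \<rho> \<tau> (verts K - Z) n) x = 0"
      using Z unfolding step_mean_def closed_under_def by (intro sum.neutral) force
    then show ?case using Suc.prems by (simp add: hit_Suc del: hit.simps(2))
  qed simp
  then show "absorbing K \<rho> \<tau> Z" using Z by (simp add: absorbing_def reach_prob_def limI)
qed

lemma Zst_eq_Union_closed:
  assumes "max_strategy K \<rho>" "min_strategy K \<tau>"
  shows "Zst K \<rho> \<tau> = \<Union>{Z. Z \<subseteq> verts K - sinks K \<and> closed_under K \<rho> \<tau> Z}"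
  unfolding Zst_def absorbing_iff_closed[OF assms] ..

lemma trap_strategy_exists:
  assumes "is_trap K \<rho> Z"
  shows "\<exists>\<tau>. min_strategy K \<tau> \<and> closed_under K \<rho> \<tau> Z"
proof -
  obtain \<tau>0 where \<tau>0: "min_strategy K \<tau>0" using min_strategy_exists ..
  define \<tau> where "\<tau> x = (if x \<in> Z then SOME y. y \<in> Z \<and> (x, y) \<in> arcs K else \<tau>0 x)" for x
  have \<tau>_Z: "\<tau> x \<in> Z \<and> (x, \<tau> x) \<in> arcs K" if "x \<in> Z" "kind K x = MinV" for x
  proof -
    have "\<exists>y. y \<in> Z \<and> (x, y) \<in> arcs K" using assms that by (auto simp: is_trap_def)
    then have "(SOME y. y \<in> Z \<and> (x, y) \<in> arcs K) \<in> Z \<and> (x, SOME y. y \<in> Z \<and> (x, y) \<in> arcs K) \<in> arcs K"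
      by (rule someI_ex)
    then show ?thesis using that(1) by (simp add: \<tau>_def)
  qed
  have "min_strategy K \<tau>"
    using \<tau>0 \<tau>_Z by (auto simp: min_strategy_def \<tau>_def)
  moreover have "closed_under K \<rho> \<tau> Z"
    unfolding closed_under_def
  proof (intro ballI impI)
    fix x y assume x: "x \<in> Z" and "y \<in> verts K" and xy: "trans K \<rho> \<tau> x y \<noteq> 0"
    then show "y \<in> Z"
      using assms \<tau>_Z[OF x] by (cases "kind K x") (auto simp: trans_def is_trap_def sinks_def split: if_splits)
  qed
  ultimately show ?thesis by blast
qed

end

locale simple_stochastic_game =
  fixes G :: "'v game"
  assumes ssg: "ssg G"

sublocale simple_stochastic_game \<subseteq> stochastic_game G
proof
  note G = ssg[unfolded ssg_def]
  show "finite (verts G)" and arcs: "arcs G \<subseteq> verts G \<times> verts G" using G by blast+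
  show "\<exists>y. (x, y) \<in> arcs G" if "x \<in> verts G" "kind G x = MinV" for x
    using G that by (auto simp: outn_def)
  show "0 \<le> prob G x y" if "x \<in> verts G" "kind G x = RandV" "(x, y) \<in> arcs G" for x y
    using G that by (force simp: outn_def)
  show "0 \<le> sval G s" if "s \<in> sinks G" for s using G that by blast
  show "(\<Sum>y\<in>verts G. if (x, y) \<in> arcs G then prob G x y else 0) = 1"
    if "x \<in> verts G" "kind G x = RandV" for x
  proof -
    have "outn G x = {y \<in> verts G. (x, y) \<in> arcs G}" using arcs by (auto simp: outn_def)
    then have "(\<Sum>y\<in>verts G. if (x, y) \<in> arcs G then prob G x y else 0) = (\<Sum>y\<in>outn G x. prob G x y)"
      using G by (simp add: sum.inter_filter)
    also have "\<dots> = 1" using G that by blast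
    finally show ?thesis .
  qed
qed

context simple_stochastic_game
begin

lemma closed_imp_is_trap:
  assumes "max_strategy G \<rho>" "min_strategy G \<tau>" "Z \<subseteq> verts G - sinks G" "closed_under G \<rho> \<tau> Z"
  shows "is_trap G \<rho> Z"
  unfolding is_trap_def
proof (intro conjI ballI)
  show "Z \<subseteq> verts G - sinks G" by (rule assms(3))
  fix x assume x: "x \<in> Z"
  have xv: "x \<in> verts G" using x assms(3) by auto
  have succ: "y \<in> Z" if "trans G \<rho> \<tau> x y \<noteq> 0" "y \<in> verts G" for y
    using assms(4) x that by (auto simp: closed_under_def)
  show "kind G x = MaxV \<longrightarrow> \<rho> x \<in> Z"
    using succ[of "\<rho> x"] max_strategy_in_verts[OF assms(1) xv] by (simp add: trans_def)
  show "kind G x = MinV \<longrightarrow> (\<exists>y\<in>Z. (x, y) \<in> arcs G)"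
    using succ[of "\<tau> x"] min_strategy_in_verts[OF assms(2) xv] assms(2) xv
    by (auto simp: trans_def min_strategy_def)
  have "0 < prob G x y" if "kind G x = RandV" "(x, y) \<in> arcs G" for y
    using ssg xv that by (auto simp: ssg_def outn_def)
  then show "kind G x = RandV \<longrightarrow> (\<forall>y. (x, y) \<in> arcs G \<longrightarrow> y \<in> Z)"
    using succ arcs_in_verts by (force simp: trans_def)
qed

lemma Zmax_eq_trap:
  assumes "max_strategy G \<rho>"
  shows "Zmax G \<rho> = trap G \<rho>"
  unfolding Zmax_def
proof (rule Greatest_equality)
  have Zst_le: "Zst G \<rho> \<tau> \<subseteq> trap G \<rho>" if "min_strategy G \<tau>" for \<tau>
    unfolding Zst_eq_Union_closed[OF assms that]
    using closed_imp_is_trap[OF assms that] is_trap_subset_trap by blast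
  obtain \<tau> where \<tau>: "min_strategy G \<tau>" "closed_under G \<rho> \<tau> (trap G \<rho>)"
    using trap_strategy_exists[OF is_trap_trap] by blast
  have "trap G \<rho> \<subseteq> verts G - sinks G" using is_trap_trap[of G \<rho>] by (simp add: is_trap_def)
  then have "trap G \<rho> = Zst G \<rho> \<tau>"
    using Zst_le[OF \<tau>(1)] \<tau> unfolding Zst_eq_Union_closed[OF assms \<tau>(1)] by blast
  then show "\<exists>\<tau>. min_strategy G \<tau> \<and> trap G \<rho> = Zst G \<rho> \<tau>" using \<tau>(1) by blast
  show "Z \<subseteq> trap G \<rho>" if "\<exists>\<tau>. min_strategy G \<tau> \<and> Z = Zst G \<rho> \<tau>" for Z
    using that Zst_le by blast
qed
end

section \<open>The transformed game\<close>

definition redirect :: "('v \<times> 'v) set \<Rightarrow> 'v \<Rightarrow> 'v \<Rightarrow> 'v + ('v \<times> 'v)" where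
  "redirect A x y = (if (x, y) \<in> A then Inr (x, y) else Inl y)"

definition base_vertex :: "'v + ('v \<times> 'v) \<Rightarrow> 'v" where
  "base_vertex u = (case u of Inl y \<Rightarrow> y | Inr e \<Rightarrow> snd e)"

lemma base_vertex_redirect [simp]: "base_vertex (redirect A x y) = y"
  by (simp add: redirect_def base_vertex_def)

lemma redirect_eq_iff [simp]: "redirect A x y = redirect A x z \<longleftrightarrow> y = z"
  by (metis base_vertex_redirect)

lemma lift_strategy_Inl: "lift_strategy A \<rho> (Inl x) = redirect A x (\<rho> x)"
  by (simp add: lift_strategy_def redirect_def)

lemma transform_simps [simp]:
  "verts (transform G A \<sigma>) = Inl ` verts G \<union> Inr ` A"
  "kind (transform G A \<sigma>) (Inl x) = kind G x"
  "kind (transform G A \<sigma>) (Inr e) = SinkV"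
  "sval (transform G A \<sigma>) (Inl x) = sval G x"
  "sval (transform G A \<sigma>) (Inr e) = val_max G \<sigma> (snd e)"
  by (simp_all add: transform_def)

lemma sinks_transform: "sinks (transform G A \<sigma>) = Inl ` sinks G \<union> Inr ` A"
  by (auto simp: sinks_def)

lemma arcs_transform_Inr: "(Inr e, u) \<in> arcs (transform G A \<sigma>) \<longleftrightarrow> e \<in> A \<and> u = Inr e"
  by (cases e) (auto simp: transform_def)

lemma arcs_transform_Inl:
  assumes "A \<subseteq> arcs G"
  shows "(Inl x, u) \<in> arcs (transform G A \<sigma>) \<longleftrightarrow> (\<exists>y. (x, y) \<in> arcs G \<and> u = redirect A x y)"
  using assms by (cases u) (auto simp: transform_def redirect_def)

lemma prob_transform_redirect: "prob (transform G A \<sigma>) (Inl x) (redirect A x y) = prob G x y"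
  by (simp add: transform_def redirect_def)

lemma trans_transform_redirect:
  assumes "A \<subseteq> arcs G" "kind G x \<noteq> SinkV"
    and "kind G x = MaxV \<Longrightarrow> \<rho>' (Inl x) = redirect A x (\<rho> x)"
    and "kind G x = MinV \<Longrightarrow> \<tau>' (Inl x) = redirect A x (\<tau> x)"
  shows "trans (transform G A \<sigma>) \<rho>' \<tau>' (Inl x) (redirect A x y) = trans G \<rho> \<tau> x y"
  using assms arcs_transform_Inl[OF assms(1), of x]
  by (cases "kind G x") (auto simp: trans_def prob_transform_redirect)

lemma trans_transform_other:
  assumes "A \<subseteq> arcs G" "kind G x \<noteq> SinkV"
    and "kind G x = MaxV \<Longrightarrow> \<rho>' (Inl x) = redirect A x (\<rho> x)"
    and "kind G x = MinV \<Longrightarrow> \<tau>' (Inl x) = redirect A x (\<tau> x)"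
    and "u \<notin> range (redirect A x)"
  shows "trans (transform G A \<sigma>) \<rho>' \<tau>' (Inl x) u = 0"
  using assms arcs_transform_Inl[OF assms(1), of x]
  by (cases "kind G x") (auto simp: trans_def)

locale transformed_game = simple_stochastic_game G for G :: "'v game" +
  fixes A :: "('v \<times> 'v) set" and \<sigma> :: "'v \<Rightarrow> 'v"
  assumes A_subset_arcs: "A \<subseteq> arcs G"
    and max_strategy_\<sigma>: "max_strategy G \<sigma>"
begin

abbreviation H :: "('v + ('v \<times> 'v)) game" where
  "H \<equiv> transform G A \<sigma>"

lemma finite_verts_transform: "finite (verts H)"
proof -
  have "finite A"
    using finite_subset[OF subset_trans[OF A_subset_arcs arcs_in_verts]] finite_verts by blast
  then show ?thesis using finite_verts by simp
qed

lemma redirect_in_verts_iff: "redirect A x y \<in> verts H \<longleftrightarrow> y \<in> verts G"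
  using A_subset_arcs arcs_in_verts by (auto simp: redirect_def)

lemma arcs_transform_subset: "arcs H \<subseteq> verts H \<times> verts H"
proof -
  have "u \<in> verts H \<and> v \<in> verts H" if uv: "(u, v) \<in> arcs H" for u v
  proof (cases u)
    case (Inl x)
    then obtain y where "(x, y) \<in> arcs G" "v = redirect A x y"
      using uv arcs_transform_Inl[OF A_subset_arcs] by blast
    then have "x \<in> verts G" "v \<in> verts H" using arcs_in_verts redirect_in_verts_iff by auto
    then show ?thesis using Inl by simp
  next
    case (Inr e)
    then show ?thesis using uv by (simp add: arcs_transform_Inr)
  qed
  then show ?thesis by auto
qed

lemma step_mean_transform:
  assumes "kind G x \<noteq> SinkV"
    and "kind G x = MaxV \<Longrightarrow> \<rho>' (Inl x) = redirect A x (\<rho> x)"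
    and "kind G x = MinV \<Longrightarrow> \<tau>' (Inl x) = redirect A x (\<tau> x)"
  shows "step_mean H \<rho>' \<tau>' f (Inl x) = step_mean G \<rho> \<tau> (\<lambda>y. f (redirect A x y)) x"
proof -
  have trans_redirect: "trans H \<rho>' \<tau>' (Inl x) (redirect A x y) = trans G \<rho> \<tau> x y" for y
    by (rule trans_transform_redirect[OF A_subset_arcs]) (use assms in auto)
  have trans_other: "trans H \<rho>' \<tau>' (Inl x) u = 0" if "u \<notin> range (redirect A x)" for u
    by (rule trans_transform_other[OF A_subset_arcs]) (use assms that in auto)
  have "redirect A x ` verts G \<subseteq> verts H" using redirect_in_verts_iff by blast
  moreover have "u \<notin> range (redirect A x)" if "u \<in> verts H - redirect A x ` verts G" for u
    using that redirect_in_verts_iff by blast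
  ultimately have "step_mean H \<rho>' \<tau>' f (Inl x)
      = (\<Sum>u\<in>redirect A x ` verts G. trans H \<rho>' \<tau>' (Inl x) u * f u)"
    unfolding step_mean_def using finite_verts_transform trans_other by (intro sum.mono_neutral_right) auto
  also have "\<dots> = step_mean G \<rho> \<tau> (\<lambda>y. f (redirect A x y)) x"
    by (simp add: sum.reindex inj_on_def trans_redirect step_mean_def)
  finally show ?thesis .
qed

lemma prob_sum_transform:
  assumes "x \<in> verts G" "kind G x = RandV"
  shows "(\<Sum>v\<in>verts H. if (Inl x, v) \<in> arcs H then prob H (Inl x) v else 0) = 1"
proof -
  obtain \<tau> where \<tau>: "min_strategy G \<tau>" using min_strategy_exists ..
  have "(\<Sum>v\<in>verts H. if (Inl x, v) \<in> arcs H then prob H (Inl x) v else 0)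
      = step_mean H (lift_strategy A \<sigma>) (lift_strategy A \<tau>) (\<lambda>_. 1) (Inl x)"
    using assms(2) by (simp add: step_mean_def trans_def)
  also have "\<dots> = step_mean G \<sigma> \<tau> (\<lambda>_. 1) x"
    using assms(2) by (simp add: step_mean_transform lift_strategy_Inl)
  also have "\<dots> = 1" by (rule step_mean_const[OF max_strategy_\<sigma> \<tau> assms(1)])
  finally show ?thesis .
qed

sublocale H: stochastic_game H
proof
  show "finite (verts H)" by (rule finite_verts_transform)
  show "arcs H \<subseteq> verts H \<times> verts H" by (rule arcs_transform_subset)
  show "\<exists>v. (u, v) \<in> arcs H" if "u \<in> verts H" "kind H u = MinV" for u
    using that MinV_arc arcs_transform_Inl[OF A_subset_arcs] by (cases u) auto
  show "0 \<le> prob H u v" if "u \<in> verts H" "kind H u = RandV" "(u, v) \<in> arcs H" for u v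
    using that prob_nonneg arcs_transform_Inl[OF A_subset_arcs]
    by (cases u) (auto simp: prob_transform_redirect)
  show "(\<Sum>v\<in>verts H. if (u, v) \<in> arcs H then prob H u v else 0) = 1"
    if "u \<in> verts H" "kind H u = RandV" for u
    using that prob_sum_transform by (cases u) auto
next
  fix s assume "s \<in> sinks H"
  then show "0 \<le> sval H s"
    using sval_nonneg val_max_nonneg[OF max_strategy_\<sigma>] A_subset_arcs arcs_in_verts
    by (auto simp: sinks_transform)
qed

lemma max_strategy_lift: "max_strategy G \<rho> \<Longrightarrow> max_strategy H (lift_strategy A \<rho>)"
  using arcs_transform_Inl[OF A_subset_arcs]
  by (auto simp: max_strategy_def lift_strategy_Inl)

lemma min_strategy_lift: "min_strategy G \<tau> \<Longrightarrow> min_strategy H (lift_strategy A \<tau>)"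
  using arcs_transform_Inl[OF A_subset_arcs]
  by (auto simp: min_strategy_def lift_strategy_Inl)

lemma min_strategy_transform_Inl:
  assumes "min_strategy H \<tau>'" "y \<in> verts G" "kind G y = MinV"
  shows "(y, base_vertex (\<tau>' (Inl y))) \<in> arcs G \<and> \<tau>' (Inl y) = redirect A y (base_vertex (\<tau>' (Inl y)))"
proof -
  have "(Inl y, \<tau>' (Inl y)) \<in> arcs H" using assms by (simp add: min_strategy_def)
  then show ?thesis using arcs_transform_Inl[OF A_subset_arcs] by auto
qed

lemma val_max_transform_Inr:
  assumes "max_strategy H \<rho>'" "e \<in> A"
  shows "val_max H \<rho>' (Inr e) = val_max G \<sigma> (snd e)"
  using H.val_max_sink[OF assms(1)] assms(2) by (simp add: sinks_transform)

lemma closed_under_transform: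
  assumes "closed_under G \<rho> \<tau> W"
  shows "closed_under H (lift_strategy A \<rho>) (lift_strategy A \<tau>) (Inl ` W \<union> Inr ` {e \<in> A. snd e \<in> W})"
  unfolding closed_under_def
proof (intro ballI impI)
  let ?s = "lift_strategy A \<rho>" and ?t = "lift_strategy A \<tau>" and ?Z = "Inl ` W \<union> Inr ` {e \<in> A. snd e \<in> W}"
  fix u v assume u: "u \<in> ?Z" and v: "v \<in> verts H" and uv: "trans H ?s ?t u v \<noteq> 0"
  show "v \<in> ?Z"
  proof (cases "\<exists>y. u = Inl y \<and> kind G y \<noteq> SinkV")
    case True
    then obtain y where y: "u = Inl y" "y \<in> W" "kind G y \<noteq> SinkV" using u by auto
    have "v \<in> range (redirect A y)"
    proof (rule ccontr)
      assume "v \<notin> range (redirect A y)"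
      then have "trans H ?s ?t u v = 0" unfolding y(1)
        by (intro trans_transform_other[OF A_subset_arcs y(3), where \<rho> = \<rho> and \<tau> = \<tau>])
          (simp_all add: lift_strategy_Inl)
      then show False using uv by simp
    qed
    then obtain z where z: "v = redirect A y z" by blast
    have "trans H ?s ?t (Inl y) (redirect A y z) = trans G \<rho> \<tau> y z"
      by (rule trans_transform_redirect[OF A_subset_arcs y(3)]) (simp_all add: lift_strategy_Inl)
    then have "trans G \<rho> \<tau> y z \<noteq> 0" using uv y(1) z by simp
    moreover have "z \<in> verts G" using v z redirect_in_verts_iff by simp
    ultimately have "z \<in> W" using assms y(2) by (auto simp: closed_under_def)
    then show ?thesis using z by (auto simp: redirect_def)
  next
    case False
    then have "kind H u = SinkV" using u by auto
    then have "v = u" using uv by (simp add: trans_def split: if_splits)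
    then show ?thesis using u by simp
  qed
qed

lemma min_val_max_superharmonic:
  defines "v \<equiv> val_max G \<sigma>" and "w \<equiv> val_max H (lift_strategy A \<sigma>)"
  assumes \<tau>G: "best_response G \<sigma> \<tau>G" and \<tau>H: "best_response H (lift_strategy A \<sigma>) \<tau>H"
    and \<tau>: "\<And>y. y \<in> verts G \<Longrightarrow> kind G y = MinV \<Longrightarrow>
      \<tau> y = (if w (Inl y) < v y then base_vertex (\<tau>H (Inl y)) else \<tau>G y)"
    and y: "y \<in> verts G"
  shows "step_mean G \<sigma> \<tau> (\<lambda>z. min (v z) (w (Inl z))) y \<le> min (v y) (w (Inl y))"
proof (cases "kind G y = SinkV")
  case True
  then show ?thesis using step_mean_SinkV y by simp
next
  case False
  let ?s = "lift_strategy A \<sigma>" and ?g = "\<lambda>z. min (v z) (w (Inl z))"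
  have s: "max_strategy H ?s" by (rule max_strategy_lift[OF max_strategy_\<sigma>])
  have le_v: "step_mean G \<sigma> \<tau> ?g y \<le> v y" if "kind G y = MinV \<Longrightarrow> \<tau> y = \<tau>G y"
  proof -
    have "step_mean G \<sigma> \<tau> ?g y \<le> step_mean G \<sigma> \<tau> v y"
      using y by (intro step_mean_mono_on_support) simp_all
    also have "\<dots> = step_mean G \<sigma> \<tau>G v y" using that by (intro step_mean_cong) auto
    also have "\<dots> = v y" using val_max_harmonic[OF max_strategy_\<sigma> \<tau>G y] by (simp add: v_def)
    finally show ?thesis .
  qed
  have le_w: "step_mean G \<sigma> \<tau> ?g y \<le> w (Inl y)" if "kind G y = MinV \<Longrightarrow> \<tau> y = base_vertex (\<tau>H (Inl y))"
  proof -
    have "?g z \<le> w (redirect A y z)" for z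
      using val_max_transform_Inr[OF s] by (simp add: redirect_def v_def w_def)
    then have "step_mean G \<sigma> \<tau> ?g y \<le> step_mean G \<sigma> \<tau> (\<lambda>z. w (redirect A y z)) y"
      using y by (intro step_mean_mono_on_support)
    also have "\<dots> = step_mean H ?s \<tau>H w (Inl y)"
      using False that \<tau>H min_strategy_transform_Inl[OF _ y]
      by (intro step_mean_transform[symmetric]) (auto simp: lift_strategy_Inl best_response_def)
    also have "\<dots> = w (Inl y)" using H.val_max_harmonic[OF s \<tau>H] y by (simp add: w_def)
    finally show ?thesis .
  qed
  show ?thesis
  proof (cases "kind G y = MinV")
    case True
    then show ?thesis using le_v le_w \<tau>[OF y] by (cases "w (Inl y) < v y") auto
  qed (use le_v le_w in simp)
qed

text \<open>MIN does at least as well in \<open>G\<close> as in \<open>G[A,\<sigma>]\<close>: copy MIN's best response in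
  \<open>G[A,\<sigma>]\<close> wherever it is better there, and the best response in \<open>G\<close> elsewhere. The minimum
  of both value vectors is then superharmonic in \<open>G\<close>, since an arc in \<open>A\<close> leads in \<open>G[A,\<sigma>]\<close>
  to a sink worth the \<open>G\<close>-value of its head.\<close>

lemma val_max_le_transform:
  assumes x: "x \<in> verts G"
  shows "val_max G \<sigma> x \<le> val_max H (lift_strategy A \<sigma>) (Inl x)"
proof -
  let ?s = "lift_strategy A \<sigma>" and ?v = "val_max G \<sigma>"
  let ?w = "val_max H ?s"
  have s: "max_strategy H ?s" by (rule max_strategy_lift[OF max_strategy_\<sigma>])
  obtain \<tau>G where \<tau>G: "best_response G \<sigma> \<tau>G" using best_response_exists[OF max_strategy_\<sigma>] ..
  obtain \<tau>H where \<tau>H: "best_response H ?s \<tau>H" using H.best_response_exists[OF s] ..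
  define \<tau> where "\<tau> y = (if ?w (Inl y) < ?v y then base_vertex (\<tau>H (Inl y)) else \<tau>G y)" for y
  have \<tau>_min: "min_strategy G \<tau>"
    using \<tau>G \<tau>H min_strategy_transform_Inl by (auto simp: min_strategy_def best_response_def \<tau>_def)
  have "?v x \<le> play_value G \<sigma> \<tau> x" by (rule val_max_le_play_value[OF max_strategy_\<sigma> \<tau>_min x])
  also have "\<dots> \<le> min (?v x) (?w (Inl x))"
  proof (rule play_value_le_superharmonic[OF max_strategy_\<sigma> \<tau>_min _ _ _ x])
    show "0 \<le> min (?v y) (?w (Inl y))" if "y \<in> verts G" for y
      using that val_max_nonneg[OF max_strategy_\<sigma>] H.val_max_nonneg[OF s] by simp
    show "sval G y \<le> min (?v y) (?w (Inl y))" if "y \<in> sinks G" for y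
      using that val_max_sink[OF max_strategy_\<sigma>] H.val_max_sink[OF s] by (simp add: sinks_transform)
    show "step_mean G \<sigma> \<tau> (\<lambda>z. min (?v z) (?w (Inl z))) y \<le> min (?v y) (?w (Inl y))"
      if "y \<in> verts G" for y
      by (rule min_val_max_superharmonic[OF \<tau>G \<tau>H _ that]) (simp add: \<tau>_def)
  qed
  also have "\<dots> \<le> ?w (Inl x)" by simp
  finally show ?thesis .
qed

text \<open>Conversely, against \<open>\<sigma>'\<close> MIN can keep the play of \<open>G[A,\<sigma>]\<close> inside the trap of \<open>\<sigma>'\<close>, up to
  the new sinks whose arcs end there; so a bound on the \<open>G\<close>-values in the trap bounds the values of
  \<open>\<sigma>'\<close> in \<open>G[A,\<sigma>]\<close>.\<close>

lemma val_max_transform_le_on_trap: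
  assumes \<sigma>': "max_strategy G \<sigma>'" and M: "0 \<le> M"
    and bound: "\<And>z. z \<in> trap G \<sigma>' \<Longrightarrow> val_max G \<sigma> z \<le> M"
    and x: "x \<in> trap G \<sigma>'"
  shows "val_max H (lift_strategy A \<sigma>') (Inl x) \<le> M"
proof -
  let ?W = "trap G \<sigma>'"
  obtain \<tau>' where \<tau>': "min_strategy G \<tau>'" "closed_under G \<sigma>' \<tau>' ?W"
    using trap_strategy_exists[OF is_trap_trap] by blast
  let ?s = "lift_strategy A \<sigma>'" and ?t = "lift_strategy A \<tau>'"
  have s: "max_strategy H ?s" and t: "min_strategy H ?t"
    using max_strategy_lift[OF \<sigma>'] min_strategy_lift[OF \<tau>'(1)] .
  have W: "?W \<subseteq> verts G - sinks G" using is_trap_trap[of G \<sigma>'] by (simp add: is_trap_def)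
  define Z where "Z = Inl ` ?W \<union> Inr ` {e \<in> A. snd e \<in> ?W}"
  define f :: "'v + 'v \<times> 'v \<Rightarrow> real"
    where "f u = (case u of Inl _ \<Rightarrow> M | Inr e \<Rightarrow> val_max G \<sigma> (snd e))" for u
  have Z: "Z \<subseteq> verts H" using W by (auto simp: Z_def)
  have f_le: "f u \<le> M" if "u \<in> Z" for u using that bound by (auto simp: Z_def f_def)
  have closed: "closed_under H ?s ?t Z"
    unfolding Z_def by (rule closed_under_transform[OF \<tau>'(2)])
  have "play_value H ?s ?t (Inl x) \<le> f (Inl x)"
  proof (rule H.play_value_le_on_closed[OF s t Z closed])
    show "0 \<le> f u" if "u \<in> Z" for u
      using that M W val_max_nonneg[OF max_strategy_\<sigma>] by (auto simp: Z_def f_def)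
    show "sval H u \<le> f u" if "u \<in> Z" "u \<in> sinks H" for u
      using that W by (auto simp: Z_def f_def sinks_transform)
    show "step_mean H ?s ?t f u \<le> f u" if u: "u \<in> Z" for u
    proof (cases u)
      case (Inl y)
      have "step_mean H ?s ?t f u \<le> M"
        using u Z closed f_le by (intro H.step_mean_le_bound[OF s t]) (auto simp: closed_under_def)
      then show ?thesis using Inl by (simp add: f_def)
    next
      case (Inr e)
      then show ?thesis using u Z by (simp add: H.step_mean_SinkV subset_iff)
    qed
    show "Inl x \<in> Z" using x by (simp add: Z_def)
  qed
  then show ?thesis
    using H.val_max_le_play_value[OF s t] x W by (force simp: f_def)
qed

end

section \<open>Improving switches\<close>

locale improvement = transformed_game G A \<sigma> for G :: "'v game" and A \<sigma> +
  fixes \<sigma>' :: "'v \<Rightarrow> 'v"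
  assumes max_strategy_\<sigma>': "max_strategy G \<sigma>'"
    and improves: "improves H (Inl ` verts G) (lift_strategy A \<sigma>') (lift_strategy A \<sigma>)"
begin

text \<open>At a MAX vertex of the trap of \<open>\<sigma>'\<close> where the value of \<open>\<sigma>\<close> is maximal over the trap,
  the two lemmas above squeeze the values of \<open>\<sigma>\<close> and \<open>\<sigma>'\<close> in \<open>G[A,\<sigma>]\<close> together, and an
  improving switch keeps its choice where the value does not change.\<close>

lemma switch_keeps_choice_at_max:
  assumes x: "x \<in> trap G \<sigma>'" "kind G x = MaxV"
    and M: "0 \<le> M" "\<And>z. z \<in> trap G \<sigma>' \<Longrightarrow> val_max G \<sigma> z \<le> M" "val_max G \<sigma> x = M"
  shows "\<sigma>' x = \<sigma> x"
proof -
  let ?u = "val_max H (lift_strategy A \<sigma>')" and ?w = "val_max H (lift_strategy A \<sigma>)"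
  have xv: "x \<in> verts G" using x(1) is_trap_trap[of G \<sigma>'] by (auto simp: is_trap_def)
  have ge: "\<forall>u\<in>Inl ` verts G. ?w u \<le> ?u u"
    using improves[unfolded improves_def] by (rule conjunct1)
  have keep: "\<forall>u\<in>Inl ` verts G. kind H u = MaxV \<longrightarrow> ?u u = ?w u \<longrightarrow>
      lift_strategy A \<sigma>' u = lift_strategy A \<sigma> u"
    using improves[unfolded improves_def, THEN conjunct2, THEN conjunct2] .
  have "?u (Inl x) \<le> M"
    by (rule val_max_transform_le_on_trap[OF max_strategy_\<sigma>' M(1,2) x(1)])
  moreover have "M \<le> ?w (Inl x)" using val_max_le_transform[OF xv] M(3) by simp
  moreover have "?w (Inl x) \<le> ?u (Inl x)" using ge xv by simp
  ultimately have "?u (Inl x) = ?w (Inl x)" by simp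
  then have "lift_strategy A \<sigma>' (Inl x) = lift_strategy A \<sigma> (Inl x)"
    using keep xv x(2) by simp
  then show ?thesis by (simp add: lift_strategy_Inl)
qed

lemma closed_under_argmax_on_trap:
  assumes \<tau>': "min_strategy G \<tau>'" "closed_under G \<sigma>' \<tau>' (trap G \<sigma>')"
    and M: "0 \<le> M" "\<And>z. z \<in> trap G \<sigma>' \<Longrightarrow> val_max G \<sigma> z \<le> M"
  shows "closed_under G \<sigma> \<tau>' {z \<in> trap G \<sigma>'. val_max G \<sigma> z = M}"
  unfolding closed_under_def
proof (intro ballI impI)
  let ?W = "trap G \<sigma>'" and ?v = "val_max G \<sigma>"
  fix z y assume "z \<in> {z \<in> ?W. ?v z = M}" and y: "y \<in> verts G" and zy: "trans G \<sigma> \<tau>' z y \<noteq> 0"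
  then have z: "z \<in> ?W" "?v z = M" by auto
  have zv: "z \<in> verts G" "kind G z \<noteq> SinkV" using z(1) is_trap_trap[of G \<sigma>'] by (auto simp: is_trap_def sinks_def)
  show "y \<in> {z \<in> ?W. ?v z = M}"
  proof (cases "kind G z = MinV")
    case True
    then have "y = \<tau>' z" using zy by (simp add: trans_def split: if_splits)
    then have "y \<in> ?W" using \<tau>'(2) z(1) y True by (auto simp: closed_under_def trans_def)
    moreover have "(z, y) \<in> arcs G" using \<tau>'(1) zv(1) True \<open>y = \<tau>' z\<close> by (simp add: min_strategy_def)
    then have "?v z \<le> ?v y" by (rule val_max_MinV_le[OF max_strategy_\<sigma> zv(1) True])
    ultimately show ?thesis using z M(2)[of y] by simp
  next
    case False
    obtain \<tau> where \<tau>: "best_response G \<sigma> \<tau>" using best_response_exists[OF max_strategy_\<sigma>] ..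
    have "trans G \<sigma> \<tau>' z = trans G \<sigma>' \<tau>' z"
      using False switch_keeps_choice_at_max[OF z(1) _ M z(2)] by (intro trans_cong) auto
    then have yW: "y \<in> ?W" using \<tau>'(2) z(1) y zy by (auto simp: closed_under_def)
    have same: "trans G \<sigma> \<tau> z = trans G \<sigma> \<tau>' z" using False by (intro trans_cong) auto
    have "min_strategy G \<tau>" using \<tau> by (simp add: best_response_def)
    then have "?v y = M"
    proof (rule step_mean_attains_bound[OF max_strategy_\<sigma> _ zv(1)])
      show "?v u \<le> M" if "u \<in> verts G" "trans G \<sigma> \<tau> z u \<noteq> 0" for u
        using that same \<open>trans G \<sigma> \<tau>' z = trans G \<sigma>' \<tau>' z\<close> \<tau>'(2) z(1) M(2) by (auto simp: closed_under_def)
      show "step_mean G \<sigma> \<tau> ?v z = M" using val_max_harmonic[OF max_strategy_\<sigma> \<tau> zv(1)] z(2) by simp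
    qed (use y zy same in auto)
    then show ?thesis using yW by simp
  qed
qed

lemma val_max_trap_eq_0:
  assumes x: "x \<in> trap G \<sigma>'"
  shows "val_max G \<sigma> x = 0"
proof -
  let ?W = "trap G \<sigma>'" and ?v = "val_max G \<sigma>"
  have W: "?W \<subseteq> verts G - sinks G" using is_trap_trap[of G \<sigma>'] by (simp add: is_trap_def)
  then have "finite ?W" using finite_verts by (auto intro: finite_subset)
  define M where "M = Max (?v ` ?W)"
  have M_ge: "?v z \<le> M" if "z \<in> ?W" for z using \<open>finite ?W\<close> that by (simp add: M_def)
  have "M \<in> ?v ` ?W" unfolding M_def using \<open>finite ?W\<close> x by (intro Max_in) auto
  then obtain z0 where z0: "z0 \<in> ?W" "?v z0 = M" by blast
  have M0: "0 \<le> M" using z0 W val_max_nonneg[OF max_strategy_\<sigma>] by force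
  obtain \<tau>' where \<tau>': "min_strategy G \<tau>'" "closed_under G \<sigma>' \<tau>' ?W"
    using trap_strategy_exists[OF is_trap_trap] by blast
  have "play_value G \<sigma> \<tau>' z0 = 0"
    using W z0 by (intro play_value_eq_0_on_closed[OF max_strategy_\<sigma> \<tau>'(1) _ closed_under_argmax_on_trap[OF \<tau>' M0 M_ge]]) auto
  moreover have "?v z0 \<le> play_value G \<sigma> \<tau>' z0"
    using z0(1) W by (intro val_max_le_play_value[OF max_strategy_\<sigma> \<tau>'(1)]) auto
  ultimately have "M = 0" using z0(2) M0 by simp
  then show ?thesis using M_ge[OF x] val_max_nonneg[OF max_strategy_\<sigma>] x W by force
qed

end

theorem proposition21:
  fixes G :: "'v game" and A :: "('v \<times> 'v) set" and \<sigma> \<sigma>' :: "'v \<Rightarrow> 'v"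
  assumes "ssg G"
    and "A \<subseteq> arcs G"
    and "max_strategy G \<sigma>"
    and "max_strategy G \<sigma>'"
    and "improves (transform G A \<sigma>) (Inl ` verts G) (lift_strategy A \<sigma>') (lift_strategy A \<sigma>)"
  shows "Zmax G \<sigma>' \<subseteq> Zmax G \<sigma>"
proof -
  interpret improvement G A \<sigma> \<sigma>'
    using assms by unfold_locales
  have "\<sigma>' x = \<sigma> x" if "x \<in> trap G \<sigma>'" "kind G x = MaxV" for x
    by (rule switch_keeps_choice_at_max[OF that order_refl]) (simp_all add: val_max_trap_eq_0 that)
  then have "is_trap G \<sigma> (trap G \<sigma>')"
    using is_trap_trap[of G \<sigma>'] by (auto simp: is_trap_def)
  then show ?thesis
    using is_trap_subset_trap Zmax_eq_trap assms(3,4) by simp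
qed

end
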